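(* The subsumption relation $\sqsubseteq$ on models over a fixed signature ($M\sqsubseteq M'$ iff there is a homomorphism $M\to M'$) is reflexive and transitive, and it is antisymmetric up to isomorphism: if $M\sqsubseteq M'$ and $M'\sqsubseteq M$ then $M$ and $M'$ are isomorphic. Hence $\sqsubseteq$ induces a partial order on isomorphism classes of models.
   Context: Signature: finite set of types $\mathsf{TYPE}$, finite set of attributes $\mathsf{ATTR}$, relation symbols $\mathsf{REL}=\bigcup_{m>1}\mathsf{REL}_m$, a set $\mathsf{NNAME}$ of base-labels, a set $\mathsf{NVAR}$ of node variables and a set $\mathsf{WVAR}$ of wrapping variables (pairwise disjoint); node labels are $\mathsf{NLABEL}=\mathsf{NNAME}\uplus\mathsf{NVAR}$. A Feature Structure with Wrappings (FSW) is $F=\langle V,\mathcal W,\mathcal I\rangle$ where $V$ is a nonempty set of nodes, $\mathcal W$ is a set of pairwise disjoint nonempty subsets of $V$ (the wrappings, with $\mathcal W\cap V=\emptyset$), and $\mathcal I$ maps each type $t$ to a subset $\mathcal I(t)\subseteq V$, each attribute $\mathsf P$ to a partial function $\mathcal I(\mathsf P)$ from $V$ to $V\cup\mathcal W$, each $m$-ary relation symbol $r$ to a subset of $(V\cup\mathcal W)^m$, and is a partial map from $\mathsf{NNAME}$ to $V$. The w-sets are the elements of $\hat{\mathcal W}=\mathcal W\cup\{V\setminus\bigcup\mathcal W\}$, a partition of $V$; $[v]$ denotes the w-set containing $v$. A model is $M=\langle F,g\rangle$ with $g=\langle g_N,g_W\rangle$, $g_N:\mathsf{NVAR}\rightharpoonup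 V$, $g_W:\mathsf{WVAR}\rightharpoonup\mathcal W$. Write $\mathcal I_g(b)=\mathcal I(b)$ for base-labels, $\mathcal I_g(x)=g_N(x)$, $\mathcal I_g(T)=g_W(T)$, and $\mathcal I_g(k,\varepsilon)=\mathcal I_g(k)$, $\mathcal I_g(k,p\mathsf Q)=\mathcal I(\mathsf Q)(\mathcal I_g(k,p))$ for attribute words $p\in\mathsf{ATTR}^*$ (partial). Models are required to satisfy: (reachability) for every $v\in V$ there are $k\in\mathsf{NLABEL}$ and $p\in\mathsf{ATTR}^*$ with $\mathcal I_g(k)\in[v]$ and $\mathcal I_g(k,p)=v$; (non-escapability) for every $W\in\mathcal W$, $v\in W$ and $p\in\mathsf{ATTR}^*$, if $\mathcal I(p)(v)$ is defined then it lies in $[v]$. A homomorphism $h:M\to M'$ is a pair $h_V:V\to V'\uplus\mathcal W'$, $h_{\mathcal W}:\mathcal W\to\mathcal W'$ such that, writing $h$ for both (and extending it to $V\cup\mathcal W$): $h(\mathcal I(t))\subseteq\mathcal I'(t)$ for all types; if $\mathcal I(\mathsf P)(v)$ is defined then $\mathcal I'(\mathsf P)(h(v))$ is defined and equals $h(\mathcal I(\mathsf P)(v))$; $h(\mathcal I(r))\subseteq\mathcal I'(r)$ for all relations; if $\mathcal I(b)$ is defined then $h(\mathcal I(b))=\mathcal I'(b)$; if $v\in W\in\mathcal W$ then $h_V(v)\in h_{\mathcal W}(W)$; if $g(x)$ is defined (for $x\in\mathsf{NVAR}\uplus\mathsf{WVAR}$) then $h(g(x))=g'(x)$. An isomorphism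 $\sigma:M\to M'$ is a homomorphism with $\sigma_V(V)\subseteq V'$, such that $\sigma_V:V\to V'$ and $\sigma_{\mathcal W}:\mathcal W\to\mathcal W'$ are bijections and $\sigma^{-1}=\langle\sigma_V^{-1},\sigma_{\mathcal W}^{-1}\rangle$ is a homomorphism $M'\to M$. *)

theory Defs
  imports Main
begin

text \<open>Signature: types 't, attributes 'a, relation symbols 'r (with arity function),
  base-labels 'b, node variables 'x, wrapping variables 'w (distinct HOL types, hence
  pairwise disjoint).\<close>

text \<open>Elements of V \<union> W (disjoint union, so W \<inter> V = {} automatically).\<close>
datatype 'v elem = Node 'v | Wrap "'v set"

datatype ('b, 'x) nlabel = Base 'b | NVar 'x

text \<open>A model: an FSW together with a variable assignment g = (g_N, g_W).\<close>
record ('t, 'a, 'r, 'b, 'x, 'w, 'v) model =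
  nodes :: "'v set"
  wraps :: "'v set set"
  Ityp  :: "'t \<Rightarrow> 'v set"
  Iattr :: "'a \<Rightarrow> 'v \<Rightarrow> 'v elem option"
  Irel  :: "'r \<Rightarrow> 'v elem list set"
  Ibase :: "'b \<Rightarrow> 'v option"
  gN    :: "'x \<Rightarrow> 'v option"
  gW    :: "'w \<Rightarrow> 'v set option"

definition elems :: "('t, 'a, 'r, 'b, 'x, 'w, 'v) model \<Rightarrow> 'v elem set" where
  "elems M = Node ` nodes M \<union> Wrap ` wraps M"

definition wset :: "('t, 'a, 'r, 'b, 'x, 'w, 'v) model \<Rightarrow> 'v \<Rightarrow> 'v set" where
  "wset M v = (if \<exists>W\<in>wraps M. v \<in> W then (THE W. W \<in> wraps M \<and> v \<in> W)
               else nodes M - \<Union>(wraps M))"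

fun astep :: "('t, 'a, 'r, 'b, 'x, 'w, 'v) model \<Rightarrow> 'v elem option \<Rightarrow> 'a \<Rightarrow> 'v elem option" where
  "astep M (Some (Node u)) Q = Iattr M Q u"
| "astep M _ Q = None"

text \<open>I(p)(e) for an attribute word p (left to right: I(pQ) = I(Q) \<circ> I(p)).\<close>
definition path_from :: "('t, 'a, 'r, 'b, 'x, 'w, 'v) model \<Rightarrow> 'v elem option \<Rightarrow> 'a list \<Rightarrow> 'v elem option" where
  "path_from M e p = foldl (astep M) e p"

fun lbl_val :: "('t, 'a, 'r, 'b, 'x, 'w, 'v) model \<Rightarrow> ('b, 'x) nlabel \<Rightarrow> 'v option" where
  "lbl_val M (Base b) = Ibase M b"
| "lbl_val M (NVar x) = gN M x"

definition lbl_path :: "('t, 'a, 'r, 'b, 'x, 'w, 'v) model \<Rightarrow> ('b, 'x) nlabel \<Rightarrow> 'a list \<Rightarrow> 'v elem option" where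
  "lbl_path M k p = path_from M (map_option Node (lbl_val M k)) p"

definition is_model :: "('r \<Rightarrow> nat) \<Rightarrow> ('t, 'a, 'r, 'b, 'x, 'w, 'v) model \<Rightarrow> bool" where
  "is_model arity M \<longleftrightarrow>
     \<comment> \<open>FSW conditions\<close>
     nodes M \<noteq> {}
   \<and> (\<forall>W\<in>wraps M. W \<noteq> {} \<and> W \<subseteq> nodes M)
   \<and> (\<forall>W1\<in>wraps M. \<forall>W2\<in>wraps M. W1 \<noteq> W2 \<longrightarrow> W1 \<inter> W2 = {})
   \<and> (\<forall>t. Ityp M t \<subseteq> nodes M)
   \<and> (\<forall>P v e. Iattr M P v = Some e \<longrightarrow> v \<in> nodes M \<and> e \<in> elems M)
   \<and> (\<forall>r. Irel M r \<subseteq> {xs. length xs = arity r \<and> set xs \<subseteq> elems M})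
   \<and> (\<forall>b v. Ibase M b = Some v \<longrightarrow> v \<in> nodes M)
     \<comment> \<open>assignment\<close>
   \<and> (\<forall>x v. gN M x = Some v \<longrightarrow> v \<in> nodes M)
   \<and> (\<forall>T W. gW M T = Some W \<longrightarrow> W \<in> wraps M)
     \<comment> \<open>reachability\<close>
   \<and> (\<forall>v\<in>nodes M. \<exists>k p u. lbl_val M k = Some u \<and> u \<in> wset M v
                          \<and> lbl_path M k p = Some (Node v))
     \<comment> \<open>non-escapability\<close>
   \<and> (\<forall>W\<in>wraps M. \<forall>v\<in>W. \<forall>p e. path_from M (Some (Node v)) p = Some e
                          \<longrightarrow> (\<exists>u. e = Node u \<and> u \<in> wset M v))"

fun hext :: "('v \<Rightarrow> 'u elem) \<Rightarrow> ('v set \<Rightarrow> 'u set) \<Rightarrow> 'v elem \<Rightarrow> 'u elem" where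
  "hext hV hW (Node v) = hV v"
| "hext hV hW (Wrap W) = Wrap (hW W)"

definition is_hom ::
  "('t, 'a, 'r, 'b, 'x, 'w, 'v) model \<Rightarrow> ('t, 'a, 'r, 'b, 'x, 'w, 'u) model
   \<Rightarrow> ('v \<Rightarrow> 'u elem) \<Rightarrow> ('v set \<Rightarrow> 'u set) \<Rightarrow> bool" where
  "is_hom M M' hV hW \<longleftrightarrow>
     (\<forall>v\<in>nodes M. hV v \<in> elems M')
   \<and> (\<forall>W\<in>wraps M. hW W \<in> wraps M')
   \<and> (\<forall>t. \<forall>v\<in>Ityp M t. hV v \<in> Node ` Ityp M' t)
   \<and> (\<forall>P v e. Iattr M P v = Some e \<longrightarrow> astep M' (Some (hV v)) P = Some (hext hV hW e))
   \<and> (\<forall>r. \<forall>xs\<in>Irel M r. map (hext hV hW) xs \<in> Irel M' r)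
   \<and> (\<forall>b v. Ibase M b = Some v \<longrightarrow> map_option Node (Ibase M' b) = Some (hV v))
   \<and> (\<forall>W\<in>wraps M. \<forall>v\<in>W. hV v \<in> Node ` hW W)
   \<and> (\<forall>x v. gN M x = Some v \<longrightarrow> map_option Node (gN M' x) = Some (hV v))
   \<and> (\<forall>T W. gW M T = Some W \<longrightarrow> gW M' T = Some (hW W))"

definition subsumes ::
  "('t, 'a, 'r, 'b, 'x, 'w, 'v) model \<Rightarrow> ('t, 'a, 'r, 'b, 'x, 'w, 'u) model \<Rightarrow> bool" where
  "subsumes M M' \<longleftrightarrow> (\<exists>hV hW. is_hom M M' hV hW)"

text \<open>Isomorphism: a homomorphism whose node part maps V into V' (hence written
  Node \<circ> \<sigma>), bijective on nodes and on wrappings, with homomorphic inverse.\<close>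
definition is_iso ::
  "('t, 'a, 'r, 'b, 'x, 'w, 'v) model \<Rightarrow> ('t, 'a, 'r, 'b, 'x, 'w, 'u) model \<Rightarrow> bool" where
  "is_iso M M' \<longleftrightarrow> (\<exists>(\<sigma>V :: 'v \<Rightarrow> 'u) (\<sigma>W :: 'v set \<Rightarrow> 'u set).
       is_hom M M' (Node \<circ> \<sigma>V) \<sigma>W
     \<and> bij_betw \<sigma>V (nodes M) (nodes M')
     \<and> bij_betw \<sigma>W (wraps M) (wraps M')
     \<and> is_hom M' M (Node \<circ> inv_into (nodes M) \<sigma>V) (inv_into (wraps M) \<sigma>W))"

end

theory Submission
  imports Defs
begin

text \<open>Reachability makes homomorphisms between models rigid: every node is the value of a
  labelled attribute path, which any homomorphism must send to the value of the same path,
  and every wrapping is pinned down by any one of its nodes because wrappings are disjoint.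
  So there is at most one homomorphism \<open>M \<rightarrow> M'\<close>, and in particular the only
  endomorphism is the identity. Given \<open>M \<sqsubseteq> M'\<close> and \<open>M' \<sqsubseteq> M\<close>, both composites are
  therefore identities, so the two homomorphisms are mutually inverse bijections on nodes and
  on wrappings, i.e. an isomorphism.\<close>

lemma is_modelD:
  assumes "is_model ar M"
  shows is_model_wraps: "W \<in> wraps M \<Longrightarrow> W \<noteq> {} \<and> W \<subseteq> nodes M"
    and is_model_wraps_disjoint:
      "\<lbrakk>W1 \<in> wraps M; W2 \<in> wraps M; W1 \<noteq> W2\<rbrakk> \<Longrightarrow> W1 \<inter> W2 = {}"
    and is_model_Ityp: "Ityp M t \<subseteq> nodes M"
    and is_model_Iattr: "Iattr M P v = Some e \<Longrightarrow> v \<in> nodes M \<and> e \<in> elems M"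
    and is_model_Irel: "xs \<in> Irel M r \<Longrightarrow> set xs \<subseteq> elems M"
    and is_model_Ibase: "Ibase M b = Some v \<Longrightarrow> v \<in> nodes M"
    and is_model_gN: "gN M x = Some v \<Longrightarrow> v \<in> nodes M"
    and is_model_gW: "gW M T = Some W \<Longrightarrow> W \<in> wraps M"
    and is_model_reachable: "v \<in> nodes M \<Longrightarrow> \<exists>k p. lbl_path M k p = Some (Node v)"
  using assms unfolding is_model_def by (auto simp: subset_iff)

lemma is_homD:
  assumes "is_hom M M' hV hW"
  shows is_hom_nodes: "v \<in> nodes M \<Longrightarrow> hV v \<in> elems M'"
    and is_hom_wraps: "W \<in> wraps M \<Longrightarrow> hW W \<in> wraps M'"
    and is_hom_Ityp: "v \<in> Ityp M t \<Longrightarrow> hV v \<in> Node ` Ityp M' t"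
    and is_hom_Iattr: "Iattr M P v = Some e \<Longrightarrow> astep M' (Some (hV v)) P = Some (hext hV hW e)"
    and is_hom_Irel: "xs \<in> Irel M r \<Longrightarrow> map (hext hV hW) xs \<in> Irel M' r"
    and is_hom_Ibase: "Ibase M b = Some v \<Longrightarrow> map_option Node (Ibase M' b) = Some (hV v)"
    and is_hom_member: "\<lbrakk>W \<in> wraps M; v \<in> W\<rbrakk> \<Longrightarrow> hV v \<in> Node ` hW W"
    and is_hom_gN: "gN M x = Some v \<Longrightarrow> map_option Node (gN M' x) = Some (hV v)"
    and is_hom_gW: "gW M T = Some W \<Longrightarrow> gW M' T = Some (hW W)"
  using assms unfolding is_hom_def by auto

lemma hext_Node_id [simp]: "hext Node id e = e"
  by (cases e) auto

lemma hext_comp: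
  "hext (hext kV kW \<circ> hV) (kW \<circ> hW) = hext kV kW \<circ> hext hV hW"
proof
  show "hext (hext kV kW \<circ> hV) (kW \<circ> hW) e = (hext kV kW \<circ> hext hV hW) e" for e
    by (cases e) auto
qed

lemma hext_mem_elems:
  assumes "is_hom M M' hV hW" and "e \<in> elems M"
  shows "hext hV hW e \<in> elems M'"
proof (cases e)
  case (Node v)
  with assms show ?thesis by (auto simp: elems_def [of M] intro: is_hom_nodes)
next
  case (Wrap W)
  with assms show ?thesis by (auto simp: elems_def intro: is_hom_wraps)
qed

lemma is_hom_id: "is_hom M M Node id"
  unfolding is_hom_def elems_def by (auto simp: hext_Node_id [abs_def])

lemma is_hom_comp:
  assumes h: "is_hom M M' hV hW" and k: "is_hom M' M'' kV kW"
  shows "is_hom M M'' (hext kV kW \<circ> hV) (kW \<circ> hW)"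
  unfolding is_hom_def
proof (intro conjI allI ballI impI)
  fix P v e assume "Iattr M P v = Some e"
  from is_hom_Iattr[OF h this] obtain u
    where "hV v = Node u" "Iattr M' P u = Some (hext hV hW e)"
    by (cases "hV v") auto
  then show "astep M'' (Some ((hext kV kW \<circ> hV) v)) P = Some (hext (hext kV kW \<circ> hV) (kW \<circ> hW) e)"
    using is_hom_Iattr[OF k] by (simp add: hext_comp)
next
  fix r xs assume "xs \<in> Irel M r"
  then show "map (hext (hext kV kW \<circ> hV) (kW \<circ> hW)) xs \<in> Irel M'' r"
    using is_hom_Irel[OF k, OF is_hom_Irel[OF h]] by (simp add: hext_comp)
next
  fix v assume "v \<in> nodes M"
  then show "(hext kV kW \<circ> hV) v \<in> elems M''"
    using hext_mem_elems[OF k is_hom_nodes[OF h]] by simp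
next
  fix t v assume "v \<in> Ityp M t"
  then show "(hext kV kW \<circ> hV) v \<in> Node ` Ityp M'' t"
    using is_hom_Ityp[OF h] is_hom_Ityp[OF k] by fastforce
next
  fix b v assume "Ibase M b = Some v"
  from is_hom_Ibase[OF h this] obtain u where "Ibase M' b = Some u" "hV v = Node u"
    by (cases "Ibase M' b") auto
  then show "map_option Node (Ibase M'' b) = Some ((hext kV kW \<circ> hV) v)"
    using is_hom_Ibase[OF k] by simp
next
  fix W v assume "W \<in> wraps M" "v \<in> W"
  then show "(hext kV kW \<circ> hV) v \<in> Node ` (kW \<circ> hW) W"
    using is_hom_member[OF h] is_hom_member[OF k] is_hom_wraps[OF h] by fastforce
next
  fix x v assume "gN M x = Some v"
  from is_hom_gN[OF h this] obtain u where "gN M' x = Some u" "hV v = Node u"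
    by (cases "gN M' x") auto
  then show "map_option Node (gN M'' x) = Some ((hext kV kW \<circ> hV) v)"
    using is_hom_gN[OF k] by simp
qed (use is_hom_wraps[OF h] is_hom_wraps[OF k] is_hom_gW[OF h] is_hom_gW[OF k] in auto)

lemma path_from_None [simp]: "path_from M None p = None"
  unfolding path_from_def by (induction p) auto

lemma path_from_Cons: "path_from M e (Q # p) = path_from M (astep M e Q) p"
  unfolding path_from_def by simp

lemma is_hom_astep:
  assumes "is_hom M M' hV hW" and "astep M (Some e) Q = Some e'"
  shows "astep M' (Some (hext hV hW e)) Q = Some (hext hV hW e')"
  using assms by (cases e) (auto dest: is_hom_Iattr)

lemma is_hom_path_from:
  assumes h: "is_hom M M' hV hW"
  shows "path_from M (Some e) p = Some e' \<Longrightarrow>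
    path_from M' (Some (hext hV hW e)) p = Some (hext hV hW e')"
proof (induction p arbitrary: e)
  case Nil
  then show ?case by (simp add: path_from_def)
next
  case (Cons Q p)
  then obtain e1 where "astep M (Some e) Q = Some e1" "path_from M (Some e1) p = Some e'"
    by (cases "astep M (Some e) Q") (auto simp: path_from_Cons)
  with Cons.IH is_hom_astep[OF h] show ?case by (simp add: path_from_Cons)
qed

lemma is_hom_lbl_path:
  assumes h: "is_hom M M' hV hW" and p: "lbl_path M k p = Some e"
  shows "lbl_path M' k p = Some (hext hV hW e)"
proof -
  obtain u where u: "lbl_val M k = Some u" and "path_from M (Some (Node u)) p = Some e"
    using p by (cases "lbl_val M k") (auto simp: lbl_path_def)
  then have path': "path_from M' (Some (hV u)) p = Some (hext hV hW e)"
    using is_hom_path_from[OF h] by (metis hext.simps(1))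
  have "map_option Node (lbl_val M' k) = Some (hV u)"
    using u is_hom_Ibase[OF h] is_hom_gN[OF h] by (cases k) auto
  then show ?thesis
    unfolding lbl_path_def by (simp only: path')
qed

lemma is_hom_unique_nodes:
  assumes "is_model ar M" and "is_hom M M' hV hW" and "is_hom M M' hV' hW'"
    and "v \<in> nodes M"
  shows "hV v = hV' v"
proof -
  obtain k p where "lbl_path M k p = Some (Node v)"
    using is_model_reachable[OF assms(1,4)] by blast
  from is_hom_lbl_path[OF assms(2) this] is_hom_lbl_path[OF assms(3) this]
  show ?thesis by simp
qed

lemma is_hom_unique_wraps:
  assumes M: "is_model ar M" and M': "is_model ar' M'"
    and h: "is_hom M M' hV hW" and h': "is_hom M M' hV' hW'" and W: "W \<in> wraps M"
  shows "hW W = hW' W"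
proof -
  obtain v where v: "v \<in> W" "v \<in> nodes M"
    using is_model_wraps[OF M W] by blast
  have "hV v \<in> Node ` hW W" "hV' v \<in> Node ` hW' W"
    using is_hom_member[OF h W v(1)] is_hom_member[OF h' W v(1)] .
  moreover have "hV v = hV' v"
    using is_hom_unique_nodes[OF M h h' v(2)] .
  ultimately have "hW W \<inter> hW' W \<noteq> {}" by auto
  then show ?thesis
    using is_model_wraps_disjoint[OF M' is_hom_wraps[OF h W] is_hom_wraps[OF h' W]] by blast
qed

lemma is_hom_endo_nodes:
  assumes "is_model ar M" and "is_hom M M hV hW" and "v \<in> nodes M"
  shows "hV v = Node v"
  using is_hom_unique_nodes[OF assms(1,2) is_hom_id assms(3)] by simp

lemma is_hom_endo_wraps:
  assumes "is_model ar M" and "is_hom M M hV hW" and "W \<in> wraps M"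
  shows "hW W = W"
  using is_hom_unique_wraps[OF assms(1,1,2) is_hom_id assms(3)] by simp

lemma is_hom_cong:
  assumes M: "is_model ar M" and h: "is_hom M M' hV hW"
    and V: "\<And>v. v \<in> nodes M \<Longrightarrow> hV v = hV' v"
    and W: "\<And>W. W \<in> wraps M \<Longrightarrow> hW W = hW' W"
  shows "is_hom M M' hV' hW'"
proof -
  have hext_agree: "hext hV hW e = hext hV' hW' e" if "e \<in> elems M" for e
    using that V W by (auto simp: elems_def)
  show ?thesis
    unfolding is_hom_def
  proof (intro conjI allI ballI impI)
    fix v assume "v \<in> nodes M"
    then show "hV' v \<in> elems M'" using is_hom_nodes[OF h] V by simp
  next
    fix W assume "W \<in> wraps M"
    then show "hW' W \<in> wraps M'" using is_hom_wraps[OF h] W by simp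
  next
    fix t v assume "v \<in> Ityp M t"
    then show "hV' v \<in> Node ` Ityp M' t"
      using is_hom_Ityp[OF h] is_model_Ityp[OF M] V by (metis subsetD)
  next
    fix P v e assume "Iattr M P v = Some e"
    then show "astep M' (Some (hV' v)) P = Some (hext hV' hW' e)"
      using is_hom_Iattr[OF h] is_model_Iattr[OF M] V hext_agree by metis
  next
    fix r xs assume "xs \<in> Irel M r"
    moreover from this have "map (hext hV hW) xs = map (hext hV' hW') xs"
      using is_model_Irel[OF M] hext_agree by (auto intro: map_cong)
    ultimately show "map (hext hV' hW') xs \<in> Irel M' r" using is_hom_Irel[OF h] by metis
  next
    fix b v assume "Ibase M b = Some v"
    then show "map_option Node (Ibase M' b) = Some (hV' v)"
      using is_hom_Ibase[OF h] is_model_Ibase[OF M] V by metis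
  next
    fix W v assume "W \<in> wraps M" "v \<in> W"
    then show "hV' v \<in> Node ` hW' W"
      using is_hom_member[OF h] is_model_wraps[OF M] V W by (metis subsetD)
  next
    fix x v assume "gN M x = Some v"
    then show "map_option Node (gN M' x) = Some (hV' v)"
      using is_hom_gN[OF h] is_model_gN[OF M] V by metis
  next
    fix T W' assume "gW M T = Some W'"
    then show "gW M' T = Some (hW' W')"
      using is_hom_gW[OF h] is_model_gW[OF M] W by metis
  qed
qed

lemma is_hom_back_and_forth_node:
  assumes M: "is_model ar M" and h: "is_hom M M' hV hW" and k: "is_hom M' M kV kW"
    and v: "v \<in> nodes M"
  shows "\<exists>u\<in>nodes M'. hV v = Node u \<and> kV u = Node v"
proof -
  have kh: "hext kV kW (hV v) = Node v"
    using is_hom_endo_nodes[OF M is_hom_comp[OF h k] v] by simp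
  have "hV v \<in> elems M'" using is_hom_nodes[OF h v] .
  with kh show ?thesis by (auto simp: elems_def)
qed

lemma subsumes_refl: "subsumes M M"
  unfolding subsumes_def using is_hom_id by blast

lemma subsumes_trans: "\<lbrakk>subsumes M M'; subsumes M' M''\<rbrakk> \<Longrightarrow> subsumes M M''"
  unfolding subsumes_def using is_hom_comp by blast

lemma subsumes_antisym:
  assumes M1: "is_model ar1 M1" and M2: "is_model ar2 M2"
    and "subsumes M1 M2" and "subsumes M2 M1"
  shows "is_iso M1 M2"
proof -
  obtain hV hW kV kW where h: "is_hom M1 M2 hV hW" and k: "is_hom M2 M1 kV kW"
    using assms(3,4) unfolding subsumes_def by blast
  have "\<forall>v\<in>nodes M1. \<exists>u. u \<in> nodes M2 \<and> hV v = Node u \<and> kV u = Node v"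
    using is_hom_back_and_forth_node[OF M1 h k] by blast
  from bchoice[OF this] obtain \<sigma>
    where \<sigma>: "\<forall>v\<in>nodes M1. \<sigma> v \<in> nodes M2 \<and> hV v = Node (\<sigma> v) \<and> kV (\<sigma> v) = Node v"
    by blast
  have "\<forall>v\<in>nodes M2. \<exists>u. u \<in> nodes M1 \<and> kV v = Node u \<and> hV u = Node v"
    using is_hom_back_and_forth_node[OF M2 k h] by blast
  from bchoice[OF this] obtain \<tau>
    where \<tau>: "\<forall>v\<in>nodes M2. \<tau> v \<in> nodes M1 \<and> kV v = Node (\<tau> v) \<and> hV (\<tau> v) = Node v"
    by blast
  have \<tau>_\<sigma>: "\<tau> (\<sigma> v) = v" if "v \<in> nodes M1" for v
    using that \<sigma> \<tau> by force
  have \<sigma>_\<tau>: "\<sigma> (\<tau> v) = v" if "v \<in> nodes M2" for v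
    using that \<sigma> \<tau> by force
  have bij_nodes: "bij_betw \<sigma> (nodes M1) (nodes M2)"
    by (rule bij_betw_byWitness[where f' = \<tau>]) (use \<sigma> \<tau> \<tau>_\<sigma> \<sigma>_\<tau> in auto)
  have wraps_inverse:
    "W \<in> wraps M1 \<Longrightarrow> kW (hW W) = W" "W' \<in> wraps M2 \<Longrightarrow> hW (kW W') = W'" for W W'
    using is_hom_endo_wraps[OF M1 is_hom_comp[OF h k]]
      is_hom_endo_wraps[OF M2 is_hom_comp[OF k h]]
    by simp_all
  have bij_wraps: "bij_betw hW (wraps M1) (wraps M2)"
    by (rule bij_betw_byWitness[where f' = kW])
      (use wraps_inverse is_hom_wraps[OF h] is_hom_wraps[OF k] in auto)
  have "is_hom M1 M2 (Node \<circ> \<sigma>) hW"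
    by (rule is_hom_cong[OF M1 h]) (use \<sigma> in auto)
  moreover have "is_hom M2 M1 (Node \<circ> inv_into (nodes M1) \<sigma>) (inv_into (wraps M1) hW)"
  proof (rule is_hom_cong[OF M2 k])
    fix v assume "v \<in> nodes M2"
    then have "inv_into (nodes M1) \<sigma> v = \<tau> v"
      using \<tau> \<sigma>_\<tau> bij_nodes by (intro inv_into_f_eq) (auto simp: bij_betw_def)
    with \<open>v \<in> nodes M2\<close> show "kV v = (Node \<circ> inv_into (nodes M1) \<sigma>) v" using \<tau> by simp
  next
    fix W assume "W \<in> wraps M2"
    then show "kW W = inv_into (wraps M1) hW W"
      using wraps_inverse is_hom_wraps[OF k] bij_wraps
      by (intro inv_into_f_eq [symmetric]) (auto simp: bij_betw_def)
  qed
  ultimately show ?thesis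
    unfolding is_iso_def using bij_nodes bij_wraps by blast
qed

lemma is_iso_imp_subsumes: "is_iso M M' \<Longrightarrow> subsumes M M' \<and> subsumes M' M"
  unfolding is_iso_def subsumes_def by blast

theorem mainTheorem3:
  fixes arity :: "'r \<Rightarrow> nat"
    and M1 :: "('t, 'a, 'r, 'b, 'x, 'w, 'v1) model"
    and M2 :: "('t, 'a, 'r, 'b, 'x, 'w, 'v2) model"
    and M3 :: "('t, 'a, 'r, 'b, 'x, 'w, 'v3) model"
  assumes "finite (UNIV :: 't set)" and "finite (UNIV :: 'a set)"
    and "\<forall>r. arity r > 1"
    and "is_model arity M1" and "is_model arity M2" and "is_model arity M3"
  shows "subsumes M1 M1
       \<and> (subsumes M1 M2 \<and> subsumes M2 M3 \<longrightarrow> subsumes M1 M3)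
       \<and> (subsumes M1 M2 \<and> subsumes M2 M1 \<longrightarrow> is_iso M1 M2)
       \<and> (is_iso M1 M2 \<longrightarrow> subsumes M1 M2 \<and> subsumes M2 M1)"
  using subsumes_refl subsumes_trans subsumes_antisym[OF assms(4,5)] is_iso_imp_subsumes
  by blast

end
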